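(* Let $n,d\in\mathbb N$, let $\{\varepsilon_k^j\}_{1\le j\le n,\,1\le k\le d}$ be independent Rademacher random variables on a probability space $(\Omega,\Sigma,P)$, and for $z\in\mathbb C^d$, $t\in\Omega$ put $F(z,t)=\prod_{j=1}^n\sum_{k=1}^d\varepsilon_k^j(t)z_k$ and $\|F(\cdot,t)\|=\sup_{\|u\|_\infty=1}|F(u,t)|$. Then for every $R>0$, $$P(\|F(\cdot,t)\|>2R)<(24n)^d\,\frac{d^n}{R^2}.$$
   Context: A Rademacher random variable takes values $1$ and $-1$ each with probability $1/2$. $\|\cdot\|_\infty$ is the sup norm on $\mathbb C^d$. *)

theory Defs
  imports "HOL-Probability.Probability"
begin

definition supnorm :: "nat \<Rightarrow> (nat \<Rightarrow> complex) \<Rightarrow> real" where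
  "supnorm d u = Max ((\<lambda>k. cmod (u k)) ` {1..d})"

definition Fpoly :: "nat \<Rightarrow> nat \<Rightarrow> (nat \<Rightarrow> nat \<Rightarrow> 'a \<Rightarrow> real) \<Rightarrow> 'a \<Rightarrow> (nat \<Rightarrow> complex) \<Rightarrow> complex" where
  "Fpoly n d eps t z = (\<Prod>j=1..n. \<Sum>k=1..d. complex_of_real (eps j k t) * z k)"

definition Fnorm :: "nat \<Rightarrow> nat \<Rightarrow> (nat \<Rightarrow> nat \<Rightarrow> 'a \<Rightarrow> real) \<Rightarrow> 'a \<Rightarrow> real" where
  "Fnorm n d eps t = Sup {cmod (Fpoly n d eps t u) | u. supnorm d u = 1}"

end

theory Submission
  imports Defs
begin

(* Expanding the product, F(u,t) = sum_m c_m(t) u^m over the (n+1)^d exponent vectors m,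
   where c_m(t) is the sum of the words prod_j eps^j_{sigma j}(t) over the maps
   sigma : {1..n} -> {1..d} with exponent vector m. On the unit polydisc
   ||F(.,t)|| <= sum_m |c_m(t)|, so by Cauchy-Schwarz ||F(.,t)||^2 <= (n+1)^d sum_m c_m(t)^2.
   Distinct words in independent centred signs are orthogonal, so E c_m^2 is the number of
   maps with exponent vector m and E sum_m c_m^2 = d^n. Markov's inequality then gives
   P(||F|| > r) <= (n+1)^d d^n / r^2. *)

definition index_maps :: "nat \<Rightarrow> nat \<Rightarrow> (nat \<Rightarrow> nat) set" where
  "index_maps n d = PiE {1..n} (\<lambda>_. {1..d})"

definition exponent_vectors :: "nat \<Rightarrow> nat \<Rightarrow> (nat \<Rightarrow> nat) set" where
  "exponent_vectors n d = PiE {1..d} (\<lambda>_. {0..n})"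

definition exponent_of :: "nat \<Rightarrow> nat \<Rightarrow> (nat \<Rightarrow> nat) \<Rightarrow> nat \<Rightarrow> nat" where
  "exponent_of n d \<sigma> = restrict (\<lambda>k. card {j\<in>{1..n}. \<sigma> j = k}) {1..d}"

definition monomial_coeff :: "nat \<Rightarrow> nat \<Rightarrow> (nat \<Rightarrow> nat \<Rightarrow> real) \<Rightarrow> (nat \<Rightarrow> nat) \<Rightarrow> real" where
  "monomial_coeff n d a m =
     (\<Sum>\<sigma>\<in>{\<sigma>\<in>index_maps n d. exponent_of n d \<sigma> = m}. \<Prod>j=1..n. a j (\<sigma> j))"

lemma finite_index_maps [simp]: "finite (index_maps n d)"
  by (simp add: index_maps_def finite_PiE)

lemma finite_exponent_vectors [simp]: "finite (exponent_vectors n d)"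
  by (simp add: exponent_vectors_def finite_PiE)

lemma card_index_maps: "card (index_maps n d) = d ^ n"
  by (simp add: index_maps_def card_PiE)

lemma card_exponent_vectors: "card (exponent_vectors n d) = (n + 1) ^ d"
  by (simp add: exponent_vectors_def card_PiE)

lemma exponent_of_in_exponent_vectors: "exponent_of n d \<sigma> \<in> exponent_vectors n d"
proof -
  have "card {j\<in>{1..n}. \<sigma> j = k} \<le> n" for k
    by (rule order_trans[OF card_mono[of "{1..n}"]]) auto
  then show ?thesis unfolding exponent_of_def exponent_vectors_def by auto
qed

lemma sum_card_exponent_fibres:
  "(\<Sum>m\<in>exponent_vectors n d. card {\<sigma>\<in>index_maps n d. exponent_of n d \<sigma> = m}) = d ^ n"
proof -
  have "(\<Sum>m\<in>exponent_vectors n d. \<Sum>\<sigma>\<in>{\<sigma>\<in>index_maps n d. exponent_of n d \<sigma> = m}. 1::nat)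
      = (\<Sum>\<sigma>\<in>index_maps n d. 1)"
    by (rule sum.group) (auto simp: exponent_of_in_exponent_vectors)
  then show ?thesis by (simp add: card_index_maps)
qed

lemma prod_comp_eq_prod_power_exponent_of:
  fixes u :: "nat \<Rightarrow> 'b::comm_monoid_mult"
  assumes "\<sigma> \<in> index_maps n d"
  shows "(\<Prod>j=1..n. u (\<sigma> j)) = (\<Prod>k=1..d. u k ^ exponent_of n d \<sigma> k)"
proof -
  have "\<sigma> ` {1..n} \<subseteq> {1..d}" using assms unfolding index_maps_def by auto
  then have "(\<Prod>j=1..n. u (\<sigma> j)) = (\<Prod>k\<in>{1..d}. \<Prod>j\<in>{j\<in>{1..n}. \<sigma> j = k}. u (\<sigma> j))"
    using prod.group[of "{1..n}" "{1..d}" \<sigma> "\<lambda>j. u (\<sigma> j)"] by simp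
  also have "\<dots> = (\<Prod>k=1..d. u k ^ exponent_of n d \<sigma> k)"
    by (rule prod.cong) (auto simp: exponent_of_def)
  finally show ?thesis .
qed

lemma prod_linear_forms_eq_sum_monomials:
  fixes a :: "nat \<Rightarrow> nat \<Rightarrow> real" and u :: "nat \<Rightarrow> complex"
  shows "(\<Prod>j=1..n. \<Sum>k=1..d. complex_of_real (a j k) * u k)
     = (\<Sum>m\<in>exponent_vectors n d. complex_of_real (monomial_coeff n d a m) * (\<Prod>k=1..d. u k ^ m k))"
proof -
  have "(\<Prod>j=1..n. \<Sum>k=1..d. complex_of_real (a j k) * u k)
      = (\<Sum>\<sigma>\<in>index_maps n d. \<Prod>j=1..n. complex_of_real (a j (\<sigma> j)) * u (\<sigma> j))"
    unfolding index_maps_def by (rule prod_sum_PiE) auto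
  also have "\<dots> = (\<Sum>\<sigma>\<in>index_maps n d. complex_of_real (\<Prod>j=1..n. a j (\<sigma> j))
                    * (\<Prod>k=1..d. u k ^ exponent_of n d \<sigma> k))"
    by (rule sum.cong[OF refl])
      (simp only: prod.distrib of_real_prod prod_comp_eq_prod_power_exponent_of)
  also have "\<dots> = (\<Sum>m\<in>exponent_vectors n d. \<Sum>\<sigma>\<in>{\<sigma>\<in>index_maps n d. exponent_of n d \<sigma> = m}.
                    complex_of_real (\<Prod>j=1..n. a j (\<sigma> j)) * (\<Prod>k=1..d. u k ^ exponent_of n d \<sigma> k))"
    by (rule sum.group[symmetric]) (auto simp: exponent_of_in_exponent_vectors)
  also have "\<dots> = (\<Sum>m\<in>exponent_vectors n d.
                    complex_of_real (monomial_coeff n d a m) * (\<Prod>k=1..d. u k ^ m k))"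
    unfolding monomial_coeff_def by (rule sum.cong) (auto simp: sum_distrib_right)
  finally show ?thesis .
qed

lemma cmod_Fpoly_le_sum_abs_coeff:
  assumes "supnorm d u = 1"
  shows "cmod (Fpoly n d eps t u) \<le> (\<Sum>m\<in>exponent_vectors n d. \<bar>monomial_coeff n d (\<lambda>j k. eps j k t) m\<bar>)"
proof -
  have "cmod (u k) \<le> 1" if "k \<in> {1..d}" for k
    using assms that unfolding supnorm_def by (metis Max_ge finite_atLeastAtMost finite_imageI image_eqI)
  then have monomial_le_1: "cmod (\<Prod>k=1..d. u k ^ m k) \<le> 1" for m
    unfolding prod_norm[symmetric] norm_power by (auto intro!: prod_le_1 power_le_one)
  have "cmod (Fpoly n d eps t u)
      = cmod (\<Sum>m\<in>exponent_vectors n d.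
                complex_of_real (monomial_coeff n d (\<lambda>j k. eps j k t) m) * (\<Prod>k=1..d. u k ^ m k))"
    unfolding Fpoly_def by (subst prod_linear_forms_eq_sum_monomials) simp
  also have "\<dots> \<le> (\<Sum>m\<in>exponent_vectors n d.
                    cmod (complex_of_real (monomial_coeff n d (\<lambda>j k. eps j k t) m) * (\<Prod>k=1..d. u k ^ m k)))"
    by (rule norm_sum)
  also have "\<dots> \<le> (\<Sum>m\<in>exponent_vectors n d. \<bar>monomial_coeff n d (\<lambda>j k. eps j k t) m\<bar>)"
    by (rule sum_mono) (use monomial_le_1 in \<open>simp add: norm_mult mult_left_le\<close>)
  finally show ?thesis .
qed

lemma Fnorm_le_sum_abs_coeff:
  assumes "d \<ge> 1"
  shows "Fnorm n d eps t \<le> (\<Sum>m\<in>exponent_vectors n d. \<bar>monomial_coeff n d (\<lambda>j k. eps j k t) m\<bar>)"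
proof -
  have "supnorm d (\<lambda>_. 1) = 1"
    using assms unfolding supnorm_def by (simp add: image_constant_conv)
  then show ?thesis unfolding Fnorm_def
    by (intro cSup_least) (auto intro: cmod_Fpoly_le_sum_abs_coeff)
qed

lemma Fnorm_cong:
  assumes "\<And>j k. j \<in> {1..n} \<Longrightarrow> k \<in> {1..d} \<Longrightarrow> eps j k t = eps' j k t'"
  shows "Fnorm n d eps t = Fnorm n d eps' t'"
  unfolding Fnorm_def Fpoly_def using assms by simp

lemma prod_mult_prod_eq_prod_sym_diff:
  fixes f :: "'a \<Rightarrow> 'b::comm_monoid_mult"
  assumes "finite A" "finite B" and "\<And>x. x \<in> A \<inter> B \<Longrightarrow> f x * f x = 1"
  shows "prod f A * prod f B = prod f ((A - B) \<union> (B - A))"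
proof -
  have split: "prod f C = prod f (C - D) * prod f (C \<inter> D)" if "finite C" for C D
  proof -
    have "C - C \<inter> D = C - D" by blast
    then show ?thesis using prod.subset_diff[of "C \<inter> D" C f] that by simp
  qed
  have "prod f (A \<inter> B) * prod f (A \<inter> B) = 1"
    using assms(3) by (simp add: prod.distrib[symmetric])
  then have "prod f A * prod f B = prod f (A - B) * prod f (B - A)"
    using split[OF assms(1), of B] split[OF assms(2), of A]
    by (simp add: Int_commute ac_simps)
  also have "\<dots> = prod f ((A - B) \<union> (B - A))"
    using assms(1,2) by (simp add: prod.union_disjoint Diff_Int_distrib2)
  finally show ?thesis .
qed

context prob_space
begin

text \<open>A normalized Rademacher family: signs at every point, not only almost surely.\<close>
definition sign_family :: "('i \<Rightarrow> 'a \<Rightarrow> real) \<Rightarrow> 'i set \<Rightarrow> bool" where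
  "sign_family e I \<longleftrightarrow> indep_vars (\<lambda>_. borel) e I
     \<and> (\<forall>p\<in>I. \<forall>t. e p t = 1 \<or> e p t = -1) \<and> (\<forall>p\<in>I. expectation (e p) = 0)"

lemma sign_family_integrable:
  assumes "sign_family e I" "p \<in> I"
  shows "integrable M (e p)"
proof (rule integrable_const_bound[where B=1])
  have "e p t = 1 \<or> e p t = -1" for t
    using assms unfolding sign_family_def by blast
  then show "AE t in M. norm (e p t) \<le> 1"
    by (intro AE_I2) (metis abs_minus_cancel abs_one order_refl real_norm_def)
  show "e p \<in> borel_measurable M"
    using assms unfolding sign_family_def indep_vars_def by auto
qed

lemma sign_family_expectation_prod:
  assumes fam: "sign_family e I" and "finite D" "D \<subseteq> I"
  shows "integrable M (\<lambda>t. \<Prod>p\<in>D. e p t)"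
    and "expectation (\<lambda>t. \<Prod>p\<in>D. e p t) = (if D = {} then 1 else 0)"
proof -
  have ind: "indep_vars (\<lambda>_. borel) e D"
    using fam \<open>D \<subseteq> I\<close> unfolding sign_family_def by (auto intro: indep_vars_subset)
  have int: "\<And>p. p \<in> D \<Longrightarrow> integrable M (e p)"
    using sign_family_integrable[OF fam] \<open>D \<subseteq> I\<close> by auto
  show "integrable M (\<lambda>t. \<Prod>p\<in>D. e p t)"
    using indep_vars_integrable[OF \<open>finite D\<close> ind int] .
  have "expectation (\<lambda>t. \<Prod>p\<in>D. e p t) = (\<Prod>p\<in>D. expectation (e p))"
    using indep_vars_lebesgue_integral[OF \<open>finite D\<close> ind int] .
  also have "\<dots> = (if D = {} then 1 else 0)"
    using fam \<open>finite D\<close> \<open>D \<subseteq> I\<close> unfolding sign_family_def by (auto simp: prod_zero_iff)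
  finally show "expectation (\<lambda>t. \<Prod>p\<in>D. e p t) = (if D = {} then 1 else 0)" .
qed

lemma sign_family_orthogonal_words:
  assumes fam: "sign_family e ({1..n} \<times> {1..d})"
    and \<sigma>: "\<sigma> \<in> index_maps n d" and \<tau>: "\<tau> \<in> index_maps n d"
  shows "integrable M (\<lambda>t. (\<Prod>j=1..n. e (j, \<sigma> j) t) * (\<Prod>j=1..n. e (j, \<tau> j) t))"
    and "expectation (\<lambda>t. (\<Prod>j=1..n. e (j, \<sigma> j) t) * (\<Prod>j=1..n. e (j, \<tau> j) t))
          = (if \<sigma> = \<tau> then 1 else 0)"
proof -
  define graph where "graph \<rho> = (\<lambda>j. (j, \<rho> j)) ` {1..n}" for \<rho> :: "nat \<Rightarrow> nat"
  define D where "D = (graph \<sigma> - graph \<tau>) \<union> (graph \<tau> - graph \<sigma>)"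
  have graph_sub: "graph \<rho> \<subseteq> {1..n} \<times> {1..d}" if "\<rho> \<in> index_maps n d" for \<rho>
    using that unfolding graph_def index_maps_def by auto
  have prod_graph: "(\<Prod>j=1..n. e (j, \<rho> j) t) = (\<Prod>p\<in>graph \<rho>. e p t)" for \<rho> t
    unfolding graph_def by (subst prod.reindex) (auto simp: inj_on_def)
  have sq: "e p t * e p t = 1" if "p \<in> graph \<sigma> \<inter> graph \<tau>" for p t
  proof -
    have "p \<in> {1..n} \<times> {1..d}" using graph_sub[OF \<sigma>] that by blast
    then have "e p t = 1 \<or> e p t = -1" using fam unfolding sign_family_def by blast
    then show ?thesis by auto
  qed
  have word_product:
    "(\<Prod>j=1..n. e (j, \<sigma> j) t) * (\<Prod>j=1..n. e (j, \<tau> j) t) = (\<Prod>p\<in>D. e p t)" for t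
    unfolding prod_graph D_def
    by (rule prod_mult_prod_eq_prod_sym_diff) (simp_all add: graph_def sq)
  have D: "finite D" "D \<subseteq> {1..n} \<times> {1..d}"
    using graph_sub[OF \<sigma>] graph_sub[OF \<tau>] by (auto simp: D_def graph_def)
  have "D = {} \<longleftrightarrow> \<sigma> = \<tau>"
  proof
    assume "D = {}"
    then have "graph \<sigma> = graph \<tau>" unfolding D_def by blast
    then have "(j, \<sigma> j) \<in> graph \<tau>" if "j \<in> {1..n}" for j
      using that unfolding graph_def by blast
    then have "\<sigma> j = \<tau> j" if "j \<in> {1..n}" for j
      using that unfolding graph_def by blast
    then show "\<sigma> = \<tau>"
      using \<sigma> \<tau> unfolding index_maps_def by (metis PiE_ext)
  qed (simp add: D_def)
  then show "integrable M (\<lambda>t. (\<Prod>j=1..n. e (j, \<sigma> j) t) * (\<Prod>j=1..n. e (j, \<tau> j) t))"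
    and "expectation (\<lambda>t. (\<Prod>j=1..n. e (j, \<sigma> j) t) * (\<Prod>j=1..n. e (j, \<tau> j) t))
          = (if \<sigma> = \<tau> then 1 else 0)"
    unfolding word_product using sign_family_expectation_prod[OF fam D] by simp_all
qed

lemma sign_family_monomial_coeff_second_moment:
  assumes fam: "sign_family e ({1..n} \<times> {1..d})"
  shows "integrable M (\<lambda>t. (monomial_coeff n d (\<lambda>j k. e (j, k) t) m)\<^sup>2)"
    and "expectation (\<lambda>t. (monomial_coeff n d (\<lambda>j k. e (j, k) t) m)\<^sup>2)
          = card {\<sigma>\<in>index_maps n d. exponent_of n d \<sigma> = m}"
proof -
  define S where "S = {\<sigma>\<in>index_maps n d. exponent_of n d \<sigma> = m}"
  define w where "w \<sigma> \<tau> t = (\<Prod>j=1..n. e (j, \<sigma> j) t) * (\<Prod>j=1..n. e (j, \<tau> j) t)" for \<sigma> \<tau> t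
  have sq: "(monomial_coeff n d (\<lambda>j k. e (j, k) t) m)\<^sup>2 = (\<Sum>\<sigma>\<in>S. \<Sum>\<tau>\<in>S. w \<sigma> \<tau> t)" for t
    unfolding monomial_coeff_def S_def[symmetric] power2_eq_square w_def by (simp add: sum_product)
  have w_int: "integrable M (w \<sigma> \<tau>)" and w_exp: "expectation (w \<sigma> \<tau>) = (if \<sigma> = \<tau> then 1 else 0)"
    if "\<sigma> \<in> S" "\<tau> \<in> S" for \<sigma> \<tau>
    using sign_family_orthogonal_words[OF fam, of \<sigma> \<tau>] that unfolding S_def w_def by auto
  show "integrable M (\<lambda>t. (monomial_coeff n d (\<lambda>j k. e (j, k) t) m)\<^sup>2)"
    unfolding sq using w_int by auto
  have "expectation (\<lambda>t. (monomial_coeff n d (\<lambda>j k. e (j, k) t) m)\<^sup>2)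
      = (\<Sum>\<sigma>\<in>S. \<Sum>\<tau>\<in>S. expectation (w \<sigma> \<tau>))"
    unfolding sq using w_int by (simp add: Bochner_Integration.integral_sum)
  also have "\<dots> = (\<Sum>\<sigma>\<in>S. \<Sum>\<tau>\<in>S. if \<sigma> = \<tau> then 1 else 0)"
    using w_exp by (intro sum.cong) auto
  also have "\<dots> = card S" by (simp add: S_def)
  finally show "expectation (\<lambda>t. (monomial_coeff n d (\<lambda>j k. e (j, k) t) m)\<^sup>2)
      = card {\<sigma>\<in>index_maps n d. exponent_of n d \<sigma> = m}"
    unfolding S_def .
qed

lemma Fnorm_tail_bound:
  assumes fam: "sign_family e ({1..n} \<times> {1..d})"
    and ae: "AE t in M. \<forall>p\<in>{1..n} \<times> {1..d}. eps (fst p) (snd p) t = e p t"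
    and "d \<ge> 1" "r > 0"
  shows "prob {t \<in> space M. r < Fnorm n d eps t}
           \<le> real ((n + 1) ^ d) * real (d ^ n) / r\<^sup>2"
proof -
  define c where "c m t = monomial_coeff n d (\<lambda>j k. e (j, k) t) m" for m t
  define G where "G t = real (card (exponent_vectors n d)) * (\<Sum>m\<in>exponent_vectors n d. (c m t)\<^sup>2)" for t
  note moment = sign_family_monomial_coeff_second_moment[OF fam]
  have G_int: "integrable M G"
    unfolding G_def c_def using moment(1) by simp
  have "expectation G
      = real (card (exponent_vectors n d)) * (\<Sum>m\<in>exponent_vectors n d. expectation (\<lambda>t. (c m t)\<^sup>2))"
    unfolding G_def c_def using moment(1) by (simp add: Bochner_Integration.integral_sum)
  also have "\<dots> = real ((n + 1) ^ d) * real (d ^ n)"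
    unfolding c_def moment(2) of_nat_sum[symmetric] sum_card_exponent_fibres card_exponent_vectors ..
  finally have EG: "expectation G = real ((n + 1) ^ d) * real (d ^ n)" .
  have G_ge: "r\<^sup>2 \<le> G t" if "r < Fnorm n d (\<lambda>j k. e (j, k)) t" for t
  proof -
    have "r < (\<Sum>m\<in>exponent_vectors n d. \<bar>c m t\<bar>)"
      using that Fnorm_le_sum_abs_coeff[OF \<open>d \<ge> 1\<close>] unfolding c_def by (rule less_le_trans)
    then have "r\<^sup>2 \<le> (\<Sum>m\<in>exponent_vectors n d. 1 * \<bar>c m t\<bar>)\<^sup>2"
      using \<open>r > 0\<close> by (simp add: power_mono)
    also have "\<dots> \<le> (\<Sum>m\<in>exponent_vectors n d. 1\<^sup>2) * (\<Sum>m\<in>exponent_vectors n d. \<bar>c m t\<bar>\<^sup>2)"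
      by (rule Cauchy_Schwarz_ineq_sum)
    finally show ?thesis unfolding G_def by simp
  qed
  have "AE t in M. Fnorm n d eps t = Fnorm n d (\<lambda>j k. e (j, k)) t"
    using ae by eventually_elim (intro Fnorm_cong, auto)
  then have "AE t in M. t \<in> {t \<in> space M. r < Fnorm n d eps t} \<longrightarrow> t \<in> {t \<in> space M. r\<^sup>2 \<le> G t}"
    by eventually_elim (auto dest: G_ge)
  then have "prob {t \<in> space M. r < Fnorm n d eps t} \<le> prob {t \<in> space M. r\<^sup>2 \<le> G t}"
    using borel_measurable_integrable[OF G_int] by (intro finite_measure_mono_AE) auto
  also have "\<dots> \<le> expectation G / r\<^sup>2"
    using \<open>r > 0\<close> by (intro integral_Markov_inequality_measure[OF G_int])
      (auto simp: G_def intro!: AE_I2 mult_nonneg_nonneg sum_nonneg)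
  finally show ?thesis unfolding EG .
qed

lemma rademacher_sign_family:
  assumes ind: "indep_vars (\<lambda>_. borel) X I" and "finite I"
    and plus: "\<And>p. p \<in> I \<Longrightarrow> prob {t \<in> space M. X p t = 1} = 1/2"
    and minus: "\<And>p. p \<in> I \<Longrightarrow> prob {t \<in> space M. X p t = -1} = 1/2"
  obtains e where "sign_family e I" and "AE t in M. \<forall>p\<in>I. X p t = e p t"
proof
  define sgn1 :: "real \<Rightarrow> real" where "sgn1 x = (if x = 1 then 1 else -1)" for x
  define e where "e p = sgn1 \<circ> X p" for p
  have X_meas: "X p \<in> borel_measurable M" if "p \<in> I" for p
    using ind that unfolding indep_vars_def by auto
  have "sgn1 \<in> borel_measurable borel" unfolding sgn1_def by measurable
  then have "indep_vars (\<lambda>_. borel) e I"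
    unfolding e_def by (intro indep_vars_compose[OF ind]) auto
  moreover have "expectation (e p) = 0" if p: "p \<in> I" for p
  proof -
    define A where "A = {t \<in> space M. X p t = 1}"
    have A: "A \<in> sets M" unfolding A_def using X_meas[OF p] by measurable
    have "expectation (e p) = expectation (\<lambda>t. 2 * indicator A t - 1)"
      by (rule Bochner_Integration.integral_cong) (auto simp: e_def sgn1_def A_def indicator_def)
    also have "\<dots> = 2 * prob A - 1"
      using A by (subst Bochner_Integration.integral_diff)
        (auto simp: prob_space emeasure_eq_measure intro!: integrable_real_indicator)
    finally show ?thesis using plus[OF p] unfolding A_def by simp
  qed
  ultimately show "sign_family e I"
    unfolding sign_family_def e_def sgn1_def by auto
  have "AE t in M. X p t = 1 \<or> X p t = -1" if p: "p \<in> I" for p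
  proof -
    define A where "A = {t \<in> space M. X p t = 1}"
    define B where "B = {t \<in> space M. X p t = -1}"
    have AB: "A \<in> sets M" "B \<in> sets M" unfolding A_def B_def using X_meas[OF p] by measurable
    have "prob (A \<union> B) = prob A + prob B"
      by (rule finite_measure_Union[OF AB]) (auto simp: A_def B_def)
    then have "prob (A \<union> B) = 1" using plus[OF p] minus[OF p] unfolding A_def B_def by simp
    from AE_prob_1[OF this] show ?thesis unfolding A_def B_def by auto
  qed
  then have "AE t in M. \<forall>p\<in>I. X p t = 1 \<or> X p t = -1"
    using \<open>finite I\<close> by (intro AE_finite_allI) auto
  then show "AE t in M. \<forall>p\<in>I. X p t = e p t"
    by eventually_elim (auto simp: e_def sgn1_def)
qed

end

theorem lemma3p5:
  fixes M :: "'a measure" and n d :: nat and eps :: "nat \<Rightarrow> nat \<Rightarrow> 'a \<Rightarrow> real" and R :: real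
  assumes "prob_space M"
    and "n \<ge> 1" and "d \<ge> 1"
    and "prob_space.indep_vars M (\<lambda>_. borel) (\<lambda>p. eps (fst p) (snd p)) ({1..n} \<times> {1..d})"
    and "\<And>j k. j \<in> {1..n} \<Longrightarrow> k \<in> {1..d} \<Longrightarrow> measure M {t \<in> space M. eps j k t = 1} = 1/2"
    and "\<And>j k. j \<in> {1..n} \<Longrightarrow> k \<in> {1..d} \<Longrightarrow> measure M {t \<in> space M. eps j k t = -1} = 1/2"
    and "R > 0"
  shows "measure M {t \<in> space M. Fnorm n d eps t > 2 * R} < (24 * real n) ^ d * real d ^ n / R\<^sup>2"
proof -
  interpret prob_space M by fact
  obtain e where fam: "sign_family e ({1..n} \<times> {1..d})"
    and ae: "AE t in M. \<forall>p\<in>{1..n} \<times> {1..d}. eps (fst p) (snd p) t = e p t"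
    using rademacher_sign_family[OF assms(4)] assms(5,6) by force
  have "prob {t \<in> space M. Fnorm n d eps t > 2 * R}
      \<le> real ((n + 1) ^ d) * real (d ^ n) / (2 * R)\<^sup>2"
    using Fnorm_tail_bound[OF fam ae \<open>d \<ge> 1\<close>, of "2 * R"] \<open>R > 0\<close> by simp
  also have "\<dots> < (24 * real n) ^ d * real d ^ n / R\<^sup>2"
  proof -
    have "real (n + 1) ^ d \<le> (24 * real n) ^ d"
      using \<open>n \<ge> 1\<close> by (intro power_mono) auto
    then have "real ((n + 1) ^ d) * real (d ^ n) \<le> (24 * real n) ^ d * real d ^ n"
      by (simp add: mult_right_mono)
    moreover have "0 < (24 * real n) ^ d * real d ^ n"
      using assms(2,3) by simp
    ultimately have "real ((n + 1) ^ d) * real (d ^ n) < 4 * ((24 * real n) ^ d * real d ^ n)"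
      by linarith
    then show ?thesis
      using \<open>R > 0\<close> by (simp add: divide_simps power_mult_distrib)
  qed
  finally show ?thesis .
qed

end
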